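(* Let $\sigma:\mathbb{R}\to\mathbb{R}$ satisfy $|\sigma(x)|\le1$ for all $x$, be $L$-Lipschitz, and be $(R,\varepsilon)$-nondegenerate with $R\ge1$, $\varepsilon<1$. Let $\ell\ge20(R+L)/\varepsilon$, $\sigma^{(\ell)}(x)=\sigma(x)e^{-x^2/(2\ell^2)}$, and define $$a=\frac{\varepsilon}{8}\sqrt{\frac{1}{R\ell}},\qquad B=4\ell\log\!\Big(\frac{\ell R}{\varepsilon}\Big),\qquad \mathcal{S}^{(\ell)}=[-B,-a]\cup[a,B].$$ Then $$\int_{\mathcal{S}^{(\ell)}}|\widehat{\sigma^{(\ell)}}(y)|^2\,dy\ge\frac{\varepsilon^2}{8R\ell^2}.$$
   Context: Fourier transform: $\widehat g(y)=\frac{1}{\sqrt{2\pi}}\int_{-\infty}^{\infty}e^{-\mathrm{i}yx}g(x)\,dx$. A function $\sigma$ is $(R,\varepsilon)$-nondegenerate if there are $x_1,x_2\in[-R,R]$ with $\sigma(x_1)-\sigma(x_2)\ge\varepsilon$. *)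

theory Defs
  imports "HOL-Analysis.Analysis"
begin

definition fourier :: "(real \<Rightarrow> complex) \<Rightarrow> real \<Rightarrow> complex" where
  "fourier g y = complex_of_real (1 / sqrt (2 * pi)) *
     integral UNIV (\<lambda>x. exp (- \<i> * complex_of_real (y * x)) * g x)"

definition nondegenerate :: "real \<Rightarrow> real \<Rightarrow> (real \<Rightarrow> real) \<Rightarrow> bool" where
  "nondegenerate R \<epsilon> \<sigma> \<longleftrightarrow>
     (\<exists>x1\<in>{-R..R}. \<exists>x2\<in>{-R..R}. \<sigma> x1 - \<sigma> x2 \<ge> \<epsilon>)"

end

theory Submission
  imports Defs "HOL-Probability.Characteristic_Functions"
begin

text \<open>
  Pick \<open>x1, x2 \<in> [-R, R]\<close> with \<open>\<sigma> x1 - \<sigma> x2 \<ge> \<epsilon>\<close>, write \<open>g\<close> for the Gaussian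
  \<open>exp (- x\<^sup>2 / (2 l\<^sup>2))\<close> and \<open>f = \<sigma> g\<close>, and integrate
  \<open>g y * Re (f_hat y * (exp (i y x1) - exp (i y x2)))\<close> over all frequencies \<open>y\<close>.
  By Fubini and the Fourier transform of the Gaussian, the result is \<open>sqrt (2 pi)\<close> times the
  difference of the smoothings of \<open>f\<close> by a normal density of width \<open>1 / l\<close> at \<open>x1\<close> and \<open>x2\<close>;
  as \<open>f\<close> is Lipschitz and close to \<open>\<sigma>\<close> on \<open>[-R, R]\<close>, this is at least \<open>2 \<epsilon>\<close>.
  On the other hand the integrand is bounded by \<open>l |y| |x1 - x2|\<close> for \<open>|y| < a\<close> and by
  \<open>2 l g y\<close> everywhere, so these frequencies and those with \<open>|y| > B\<close> contribute little,
  while on \<open>S = [-B, -a] \<union> [a, B]\<close> it is at most \<open>2 g |f_hat| \<le> t |f_hat|\<^sup>2 + g / t\<close>.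
  Hence \<open>2 \<epsilon>\<close> is bounded by \<open>t\<close> times the energy of \<open>f_hat\<close> on \<open>S\<close> plus small terms,
  and \<open>t = 8 R l\<^sup>2 / \<epsilon>\<close> gives the claim.
\<close>

definition gauss :: "real \<Rightarrow> real \<Rightarrow> real" where
  "gauss l x = exp (- x\<^sup>2 / (2 * l\<^sup>2))"

lemma gauss_pos [simp]: "0 < gauss l x"
  by (simp add: gauss_def)

lemma gauss_nonneg [simp]: "0 \<le> gauss l x"
  by (simp add: gauss_def)

lemma gauss_le_one [simp]: "gauss l x \<le> 1"
  by (simp add: gauss_def)

lemma gauss_measurable [measurable]: "gauss l \<in> borel_measurable borel"
  unfolding gauss_def by measurable

lemma one_minus_gauss_le: "1 - gauss l x \<le> x\<^sup>2 / (2 * l\<^sup>2)"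
  using exp_ge_add_one_self[of "- x\<^sup>2 / (2 * l\<^sup>2)"] by (simp add: gauss_def)

lemma gauss_le_exp_mult_gauss:
  assumes "0 \<le> B" "B \<le> \<bar>y\<bar>"
  shows "gauss l y \<le> exp (- B\<^sup>2 / (4 * l\<^sup>2)) * gauss (sqrt 2 * l) y"
proof -
  have "B\<^sup>2 \<le> y\<^sup>2"
    using assms abs_le_square_iff[of B y] by simp
  then have "gauss (sqrt 2 * l) y \<le> exp (- B\<^sup>2 / (4 * l\<^sup>2))"
    by (simp add: gauss_def power_mult_distrib divide_right_mono)
  moreover have "gauss l y = gauss (sqrt 2 * l) y * gauss (sqrt 2 * l) y"
    by (simp add: gauss_def power_mult_distrib flip: exp_add)
  ultimately show ?thesis
    by (simp add: mult_right_mono)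
qed

lemma has_bochner_integral_std_normal_density_cos:
  "has_bochner_integral lborel (\<lambda>x. std_normal_density x * cos (t * x)) (exp (- t\<^sup>2 / 2))"
proof -
  have bounded: "norm (std_normal_density x *\<^sub>R iexp (t * x)) \<le> std_normal_density x" for x
    by (simp add: normal_density_nonneg)
  have integrable: "integrable lborel (\<lambda>x. std_normal_density x *\<^sub>R iexp (t * x))"
    by (rule Bochner_Integration.integrable_bound[OF integrable_normal_density[of 1 0]])
      (use bounded in auto)
  have "(LINT x|lborel. std_normal_density x *\<^sub>R iexp (t * x)) = char std_normal_distribution t"
    unfolding char_def by (subst integral_density) (auto simp: normal_density_nonneg)
  also have "\<dots> = complex_of_real (exp (- t\<^sup>2 / 2))"
    by (simp add: char_std_normal_distribution)
  finally have "has_bochner_integral lborel (\<lambda>x. Re (std_normal_density x *\<^sub>R iexp (t * x)))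
      (exp (- t\<^sup>2 / 2))"
    using has_bochner_integral_Re[OF has_bochner_integral_integrable[OF integrable]] by simp
  then show ?thesis
    by (simp add: Re_exp)
qed

lemma has_bochner_integral_gauss_cos:
  assumes l: "0 < l"
  shows "has_bochner_integral lborel (\<lambda>y. gauss l y * cos (y * t))
           (l * sqrt (2 * pi) * exp (- (l * t)\<^sup>2 / 2))"
proof -
  let ?I = "l * sqrt (2 * pi) * exp (- (l * t)\<^sup>2 / 2)"
  have "(\<lambda>x. sqrt (2 * pi) * (std_normal_density x * cos ((l * t) * x))) =
        (\<lambda>x. gauss l (0 + l * x) * cos ((0 + l * x) * t))"
    using l by (auto simp: gauss_def std_normal_density_def power_mult_distrib mult_ac)
  moreover have "sqrt (2 * pi) * exp (- (l * t)\<^sup>2 / 2) = ?I /\<^sub>R \<bar>l\<bar>"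
    using l by simp
  moreover have "has_bochner_integral lborel
      (\<lambda>x. sqrt (2 * pi) * (std_normal_density x * cos ((l * t) * x)))
      (sqrt (2 * pi) * exp (- (l * t)\<^sup>2 / 2))"
    by (intro has_bochner_integral_mult_right has_bochner_integral_std_normal_density_cos)
  ultimately show ?thesis
    using lborel_has_bochner_integral_real_affine_iff[of l "\<lambda>y. gauss l y * cos (y * t)" ?I 0] l
    by (simp only:)
qed

lemma has_bochner_integral_gauss:
  assumes "0 < l"
  shows "has_bochner_integral lborel (gauss l) (l * sqrt (2 * pi))"
  using has_bochner_integral_gauss_cos[OF assms, of 0]
  by (simp only: mult_zero_right cos_zero mult_1_right power_zero_numeral minus_zero div_0 exp_zero)

lemma integrable_gauss: "0 < l \<Longrightarrow> integrable lborel (gauss l)"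
  by (rule integrable.intros[OF has_bochner_integral_gauss])

lemma integral_gauss: "0 < l \<Longrightarrow> (LINT x|lborel. gauss l x) = l * sqrt (2 * pi)"
  by (rule has_bochner_integral_integral_eq[OF has_bochner_integral_gauss])

lemma gauss_lipschitz:
  assumes "0 < l"
  shows "(1 / l)-lipschitz_on UNIV (gauss l)"
proof (rule bounded_derivative_imp_lipschitz)
  fix x :: real
  let ?D = "gauss l x * (- x / l\<^sup>2)"
  show "(gauss l has_derivative (\<lambda>h. h * ?D)) (at x within UNIV)"
    using assms unfolding gauss_def
    by (auto intro!: derivative_eq_intros simp: field_simps power2_eq_square)
  define u where "u = \<bar>x\<bar> / l"
  have "u \<le> 1 + u\<^sup>2 / 2"
    using zero_le_power2[of "u - 1"] by (simp add: power2_diff)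
  also have "\<dots> \<le> exp (u\<^sup>2 / 2)"
    by (rule exp_ge_add_one_self)
  finally have "u * exp (- u\<^sup>2 / 2) \<le> 1"
    by (simp add: exp_minus divide_inverse[symmetric] pos_divide_le_eq)
  moreover have "u\<^sup>2 / 2 = x\<^sup>2 / (2 * l\<^sup>2)"
    unfolding u_def by (simp add: power_divide)
  ultimately have "\<bar>x\<bar> / l * gauss l x \<le> 1"
    unfolding gauss_def u_def by simp
  moreover have "onorm (\<lambda>h. h * ?D) = \<bar>?D\<bar>"
    using onorm_scaleR_left[OF bounded_linear_ident, of ?D] by (simp add: onorm_id)
  ultimately show "onorm (\<lambda>h. h * ?D) \<le> 1 / l"
    using assms by (simp add: abs_mult power2_eq_square divide_le_eq mult.commute)
qed (use assms in auto)

lemma lipschitz_on_mult_real: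
  fixes f g :: "'a::metric_space \<Rightarrow> real"
  assumes f: "L-lipschitz_on S f" and g: "M-lipschitz_on S g"
    and "\<And>x. x \<in> S \<Longrightarrow> \<bar>f x\<bar> \<le> A" "\<And>x. x \<in> S \<Longrightarrow> \<bar>g x\<bar> \<le> B" "0 \<le> A" "0 \<le> B"
  shows "(A * M + B * L)-lipschitz_on S (\<lambda>x. f x * g x)"
proof (rule lipschitz_onI)
  fix x y assume xy: "x \<in> S" "y \<in> S"
  have "f x * g x - f y * g y = f x * (g x - g y) + g y * (f x - f y)"
    by (simp add: algebra_simps)
  then have "dist (f x * g x) (f y * g y) \<le> \<bar>f x\<bar> * dist (g x) (g y) + \<bar>g y\<bar> * dist (f x) (f y)"
    by (metis abs_mult abs_triangle_ineq dist_real_def)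
  also have "\<dots> \<le> A * (M * dist x y) + B * (L * dist x y)"
    using assms xy lipschitz_onD[OF f xy] lipschitz_onD[OF g xy]
    by (intro add_mono mult_mono) auto
  finally show "dist (f x * g x) (f y * g y) \<le> (A * M + B * L) * dist x y"
    by (simp add: algebra_simps)
qed (use assms lipschitz_on_nonneg[OF f] lipschitz_on_nonneg[OF g] in auto)

lemma abs_integral_mult_normal_density_sub_le:
  fixes f :: "real \<Rightarrow> real"
  assumes lip: "K-lipschitz_on UNIV f" and s: "0 < s"
  shows "\<bar>(LINT x|lborel. f x * normal_density \<mu> s x) - f \<mu>\<bar> \<le> K * s * sqrt (2 / pi)"
proof -
  let ?N = "normal_density \<mu> s"
  have [measurable]: "f \<in> borel_measurable borel"
    using lipschitz_on_continuous_on[OF lip] by (rule borel_measurable_continuous_onI)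
  have dev: "\<bar>(f x - f \<mu>) * ?N x\<bar> \<le> K * (?N x * \<bar>x - \<mu>\<bar>)" for x
  proof -
    have "\<bar>f x - f \<mu>\<bar> * ?N x \<le> K * \<bar>x - \<mu>\<bar> * ?N x"
      using lipschitz_onD[OF lip, of x \<mu>] by (intro mult_right_mono) (auto simp: dist_real_def)
    then show ?thesis
      by (simp add: abs_mult mult_ac)
  qed
  have int_moment: "integrable lborel (\<lambda>x. K * (?N x * \<bar>x - \<mu>\<bar>))"
    using integrable_normal_moment_abs[of s \<mu> 1] s by simp
  have int_dev: "integrable lborel (\<lambda>x. (f x - f \<mu>) * ?N x)"
    by (rule Bochner_Integration.integrable_bound[OF int_moment])
      (auto intro!: AE_I2 order_trans[OF dev abs_ge_self])
  have "(LINT x|lborel. f x * ?N x) - f \<mu> = (LINT x|lborel. (f x - f \<mu>) * ?N x)"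
  proof -
    have int_const: "integrable lborel (\<lambda>x. f \<mu> * ?N x)"
      using integrable_normal_density[OF s] by simp
    from Bochner_Integration.integrable_add[OF int_dev int_const]
    have "integrable lborel (\<lambda>x. f x * ?N x)"
      by (simp add: algebra_simps)
    then show ?thesis
      using int_const integral_normal_density[OF s]
      by (simp add: left_diff_distrib Bochner_Integration.integral_diff)
  qed
  then have "\<bar>(LINT x|lborel. f x * ?N x) - f \<mu>\<bar> \<le> (LINT x|lborel. \<bar>(f x - f \<mu>) * ?N x\<bar>)"
    using integral_norm_bound[of lborel "\<lambda>x. (f x - f \<mu>) * ?N x"] by simp
  also have "\<dots> \<le> (LINT x|lborel. K * (?N x * \<bar>x - \<mu>\<bar>))"
    by (intro integral_mono) (use int_dev int_moment dev in auto)
  also have "\<dots> = K * s * sqrt (2 / pi)"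
    using integral_normal_moment_abs_odd[where k=0 and \<mu>=\<mu> and \<sigma>=s] s by simp
  finally show ?thesis .
qed

lemma scaled_gauss_eq_normal_density:
  assumes "0 < l"
  shows "l * exp (- (l * (x - \<mu>))\<^sup>2 / 2) = sqrt (2 * pi) * normal_density \<mu> (1 / l) x"
proof -
  have "sqrt (2 * pi * (1 / l)\<^sup>2) = sqrt (2 * pi) / l"
    using assms by (simp add: real_sqrt_mult power_divide real_sqrt_divide)
  moreover have "(x - \<mu>)\<^sup>2 / (2 * (1 / l)\<^sup>2) = (l * (x - \<mu>))\<^sup>2 / 2"
    by (simp add: power_mult_distrib power_divide)
  ultimately show ?thesis
    using assms by (simp add: normal_density_def)
qed

lemma integral_gauss_mult_cos:
  assumes l: "0 < l"
  shows "(LINT y|lborel. gauss l y * cos (y * (x - \<mu>))) = 2 * pi * normal_density \<mu> (1 / l) x"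
proof -
  have "(LINT y|lborel. gauss l y * cos (y * (x - \<mu>))) =
        sqrt (2 * pi) * (l * exp (- (l * (x - \<mu>))\<^sup>2 / 2))"
    using has_bochner_integral_integral_eq[OF has_bochner_integral_gauss_cos[OF l, of "x - \<mu>"]]
    by (simp add: mult_ac)
  also have "\<dots> = sqrt (2 * pi) * (sqrt (2 * pi) * normal_density \<mu> (1 / l) x)"
    by (simp only: scaled_gauss_eq_normal_density[OF l])
  also have "\<dots> = 2 * pi * normal_density \<mu> (1 / l) x"
    by (simp only: mult.assoc[symmetric] real_sqrt_mult_self) simp
  finally show ?thesis .
qed

lemma (in pair_sigma_finite) integrable_product:
  fixes f :: "'a \<Rightarrow> real" and g :: "'b \<Rightarrow> real"
  assumes f: "integrable M1 f" and g: "integrable M2 g"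
  shows "integrable (M1 \<Otimes>\<^sub>M M2) (\<lambda>(x, y). f x * g y)"
proof (rule Fubini_integrable)
  have "(\<lambda>x. \<integral>y. norm (f x * g y) \<partial>M2) = (\<lambda>x. norm (f x) * (\<integral>y. norm (g y) \<partial>M2))"
    by (simp add: abs_mult)
  then show "integrable M1 (\<lambda>x. \<integral>y. norm (case (x, y) of (x, y) \<Rightarrow> f x * g y) \<partial>M2)"
    using f by simp
qed (use f g in auto)

lemma norm_iexp_diff_le: "cmod (iexp a - iexp b) \<le> \<bar>a - b\<bar>"
proof -
  have "iexp a - iexp b = iexp b * (iexp (a - b) - 1)"
    by (simp add: algebra_simps flip: exp_add)
  then have "cmod (iexp a - iexp b) = cmod (iexp (a - b) - 1)"
    by (simp add: norm_mult)
  also have "\<dots> \<le> \<bar>a - b\<bar>"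
    using iexp_approx1[of "a - b" 0] by simp
  finally show ?thesis .
qed

lemma norm_iexp_diff_le_2: "cmod (iexp a - iexp b) \<le> 2"
  using norm_triangle_ineq4[of "iexp a" "iexp b"] by simp

lemma integrable_fourier_integrand:
  fixes g :: "real \<Rightarrow> complex"
  assumes g: "integrable lborel g"
  shows "integrable lborel (\<lambda>x. exp (- \<i> * complex_of_real (y * x)) * g x)"
proof (rule Bochner_Integration.integrable_bound[OF integrable_norm[OF g]])
  have [measurable]: "g \<in> borel_measurable borel"
    using g by auto
  show "(\<lambda>x. exp (- \<i> * complex_of_real (y * x)) * g x) \<in> borel_measurable lborel"
    by (simp add: borel_measurable_continuous_onI continuous_intros)
qed (auto simp: norm_mult)

lemma fourier_eq_lebesgue_integral:
  assumes "integrable lborel g"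
  shows "fourier g y =
    complex_of_real (1 / sqrt (2 * pi)) *
    (LINT x|lborel. exp (- \<i> * complex_of_real (y * x)) * g x)"
  using has_integral_integral_lborel[OF integrable_fourier_integrand[OF assms]]
  by (simp add: fourier_def integral_unique)

lemma norm_fourier_le:
  assumes "integrable lborel g"
  shows "cmod (fourier g y) \<le> (LINT x|lborel. cmod (g x)) / sqrt (2 * pi)"
proof -
  have "cmod (LINT x|lborel. exp (- \<i> * complex_of_real (y * x)) * g x) \<le>
        (LINT x|lborel. cmod (exp (- \<i> * complex_of_real (y * x)) * g x))"
    by (rule integral_norm_bound)
  then show ?thesis
    by (simp add: fourier_eq_lebesgue_integral[OF assms] norm_mult norm_divide divide_right_mono)
qed

lemma fourier_measurable:
  assumes "integrable lborel g"
  shows "fourier g \<in> borel_measurable borel"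
proof -
  have [measurable]: "g \<in> borel_measurable borel"
    using assms by auto
  have "(\<lambda>p::real \<times> real. exp (- \<i> * complex_of_real (fst p * snd p))) \<in> borel_measurable borel"
    by (simp add: borel_measurable_continuous_onI continuous_intros)
  then have [measurable]: "(\<lambda>p::real \<times> real. exp (- \<i> * complex_of_real (fst p * snd p)))
      \<in> borel_measurable (borel \<Otimes>\<^sub>M lborel)"
    by (simp add: borel_prod)
  have "(\<lambda>y. LINT x|lborel. exp (- \<i> * complex_of_real (y * x)) * g x) \<in> borel_measurable borel"
    by (rule lborel.borel_measurable_lebesgue_integral) measurable
  then show ?thesis
    unfolding fourier_eq_lebesgue_integral[OF assms, abs_def] by measurable
qed

definition inversion_integrand :: "(real \<Rightarrow> real) \<Rightarrow> real \<Rightarrow> real \<Rightarrow> real" where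
  "inversion_integrand f x y = Re (fourier (\<lambda>t. complex_of_real (f t)) y * iexp (y * x))"

lemma inversion_integrand_eq_integral:
  assumes f: "integrable lborel f"
  shows "inversion_integrand f x0 y = (LINT x|lborel. f x * cos (y * (x - x0))) / sqrt (2 * pi)"
proof -
  let ?F = "\<lambda>x. complex_of_real (f x)"
  have kernel:
    "exp (- \<i> * complex_of_real (y * x)) * ?F x * iexp (y * x0) = ?F x * iexp (y * (x0 - x))" for x
  proof -
    have "exp (- \<i> * complex_of_real (y * x)) * iexp (y * x0) = iexp (y * (x0 - x))"
      by (simp add: algebra_simps flip: exp_add)
    then show ?thesis
      by (simp add: mult_ac)
  qed
  have "integrable lborel (\<lambda>x. exp (- \<i> * complex_of_real (y * x)) * ?F x * iexp (y * x0))"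
    using integrable_fourier_integrand[OF integrable_of_real[OF f]] by simp
  then have int: "integrable lborel (\<lambda>x. ?F x * iexp (y * (x0 - x)))"
    by (simp only: kernel)
  have "(LINT x|lborel. exp (- \<i> * complex_of_real (y * x)) * ?F x) * iexp (y * x0) =
        (LINT x|lborel. ?F x * iexp (y * (x0 - x)))"
    by (subst integral_mult_left_zero[symmetric]) (simp only: kernel)
  also have "Re \<dots> = (LINT x|lborel. Re (?F x * iexp (y * (x0 - x))))"
    by (rule integral_Re[OF int, symmetric])
  also have "\<dots> = (LINT x|lborel. f x * cos (y * (x - x0)))"
  proof (rule Bochner_Integration.integral_cong)
    fix x
    have "cos (y * (x0 - x)) = cos (y * (x - x0))"
      by (metis cos_minus minus_diff_eq mult_minus_right)
    then show "Re (?F x * iexp (y * (x0 - x))) = f x * cos (y * (x - x0))"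
      by (simp add: Re_exp)
  qed simp
  finally show ?thesis
    unfolding inversion_integrand_def fourier_eq_lebesgue_integral[OF integrable_of_real[OF f]]
    by (simp add: mult.assoc)
qed

lemma abs_inversion_integrand_diff_le:
  "\<bar>inversion_integrand f x1 y - inversion_integrand f x2 y\<bar> \<le>
     cmod (fourier (\<lambda>t. complex_of_real (f t)) y) * cmod (iexp (y * x1) - iexp (y * x2))"
proof -
  have "inversion_integrand f x1 y - inversion_integrand f x2 y =
        Re (fourier (\<lambda>t. complex_of_real (f t)) y * (iexp (y * x1) - iexp (y * x2)))"
    by (simp add: inversion_integrand_def right_diff_distrib)
  then show ?thesis
    by (metis abs_Re_le_cmod norm_mult)
qed

lemma abs_inversion_integrand_le:
  "\<bar>inversion_integrand f x y\<bar> \<le> cmod (fourier (\<lambda>t. complex_of_real (f t)) y)"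
  unfolding inversion_integrand_def
  by (metis abs_Re_le_cmod norm_exp_i_times mult_1_right norm_mult)

lemma integral_gauss_mult_inversion_integrand:
  assumes f: "integrable lborel f" and l: "0 < l"
  shows "(LINT y|lborel. gauss l y * inversion_integrand f x0 y) =
           sqrt (2 * pi) * (LINT x|lborel. f x * normal_density x0 (1 / l) x)"
proof -
  define H where "H x y = f x * (gauss l y * cos (y * (x - x0)))" for x y
  have [measurable]: "f \<in> borel_measurable borel"
    using f by auto
  have "integrable (lborel \<Otimes>\<^sub>M lborel) (case_prod H)"
  proof (rule Bochner_Integration.integrable_bound)
    show "integrable (lborel \<Otimes>\<^sub>M lborel) (\<lambda>(x, y). f x * gauss l y)"
      by (rule lborel_pair.integrable_product[OF f integrable_gauss[OF l]])
    show "AE p in lborel \<Otimes>\<^sub>M lborel.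
            norm (case_prod H p) \<le> norm (case p of (x, y) \<Rightarrow> f x * gauss l y)"
      by (auto simp: H_def abs_mult intro!: AE_I2 mult_left_mono)
  qed (unfold H_def, measurable)
  then have Fubini: "(LINT y|lborel. LINT x|lborel. H x y) = (LINT x|lborel. LINT y|lborel. H x y)"
    by (rule lborel_pair.Fubini_integral)
  have inner: "(LINT y|lborel. H x y) = 2 * pi * (f x * normal_density x0 (1 / l) x)" for x
    by (simp add: H_def integral_gauss_mult_cos[OF l] mult_ac)
  have "gauss l y * inversion_integrand f x0 y = (LINT x|lborel. H x y) / sqrt (2 * pi)" for y
    by (simp add: inversion_integrand_eq_integral[OF f] H_def mult.left_commute
        flip: integral_mult_right_zero)
  then have "(LINT y|lborel. gauss l y * inversion_integrand f x0 y) =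
             (LINT y|lborel. LINT x|lborel. H x y) / sqrt (2 * pi)"
    by simp
  also have "\<dots> = 2 * pi / sqrt (2 * pi) * (LINT x|lborel. f x * normal_density x0 (1 / l) x)"
    by (simp only: Fubini inner integral_mult_right_zero times_divide_eq_left)
  also have "2 * pi / sqrt (2 * pi) = sqrt (2 * pi)"
    by (rule real_div_sqrt) simp
  finally show ?thesis .
qed

locale gauss_dominated =
  fixes f :: "real \<Rightarrow> real" and l :: real
  assumes f_measurable [measurable]: "f \<in> borel_measurable borel"
    and abs_le_gauss: "\<And>x. \<bar>f x\<bar> \<le> gauss l x"
    and l_pos: "0 < l"
begin

abbreviation f_hat :: "real \<Rightarrow> complex" where
  "f_hat \<equiv> fourier (\<lambda>x. complex_of_real (f x))"

definition inversion_gap :: "real \<Rightarrow> real \<Rightarrow> real \<Rightarrow> real" where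
  "inversion_gap x1 x2 y = gauss l y * (inversion_integrand f x1 y - inversion_integrand f x2 y)"

lemma integrable_f: "integrable lborel f"
  by (rule Bochner_Integration.integrable_bound[OF integrable_gauss[OF l_pos]])
    (auto intro!: AE_I2 simp: abs_le_gauss)

lemma norm_f_hat_le: "cmod (f_hat y) \<le> l"
proof -
  have "cmod (f_hat y) \<le> (LINT x|lborel. \<bar>f x\<bar>) / sqrt (2 * pi)"
    using norm_fourier_le[OF integrable_of_real[OF integrable_f], of y] by simp
  also have "\<dots> \<le> (LINT x|lborel. gauss l x) / sqrt (2 * pi)"
    using integrable_f integrable_gauss[OF l_pos]
    by (intro divide_right_mono integral_mono) (auto simp: abs_le_gauss)
  also have "\<dots> = l"
    by (simp add: integral_gauss[OF l_pos])
  finally show ?thesis .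
qed

lemma f_hat_measurable [measurable]: "f_hat \<in> borel_measurable borel"
  by (rule fourier_measurable[OF integrable_of_real[OF integrable_f]])

lemma inversion_integrand_measurable [measurable]:
  "(\<lambda>y. inversion_integrand f x y) \<in> borel_measurable borel"
  unfolding inversion_integrand_def by measurable

lemma inversion_gap_measurable [measurable]: "inversion_gap x1 x2 \<in> borel_measurable borel"
  unfolding inversion_gap_def[abs_def] by measurable

lemma abs_inversion_gap_le:
  "\<bar>inversion_gap x1 x2 y\<bar> \<le> gauss l y * (cmod (f_hat y) * min 2 (\<bar>y\<bar> * \<bar>x1 - x2\<bar>))"
proof -
  have "cmod (iexp (y * x1) - iexp (y * x2)) \<le> \<bar>y\<bar> * \<bar>x1 - x2\<bar>"
    using norm_iexp_diff_le[of "y * x1" "y * x2"] by (simp add: abs_mult flip: right_diff_distrib)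
  then have iexp_bound: "cmod (iexp (y * x1) - iexp (y * x2)) \<le> min 2 (\<bar>y\<bar> * \<bar>x1 - x2\<bar>)"
    using norm_iexp_diff_le_2[of "y * x1" "y * x2"] by auto
  have "\<bar>inversion_integrand f x1 y - inversion_integrand f x2 y\<bar> \<le>
        cmod (f_hat y) * min 2 (\<bar>y\<bar> * \<bar>x1 - x2\<bar>)"
    using abs_inversion_integrand_diff_le[of f x1 y x2] mult_left_mono[OF iexp_bound norm_ge_zero]
    by (rule order_trans)
  then show ?thesis
    unfolding inversion_gap_def by (simp add: abs_mult mult_left_mono)
qed

lemma abs_inversion_gap_le_gauss: "\<bar>inversion_gap x1 x2 y\<bar> \<le> 2 * l * gauss l y"
proof -
  have "\<bar>inversion_gap x1 x2 y\<bar> \<le> gauss l y * (cmod (f_hat y) * min 2 (\<bar>y\<bar> * \<bar>x1 - x2\<bar>))"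
    by (rule abs_inversion_gap_le)
  also have "\<dots> \<le> gauss l y * (l * 2)"
    using norm_f_hat_le l_pos by (intro mult_left_mono mult_mono) auto
  finally show ?thesis
    by (simp add: mult_ac)
qed

lemma integrable_inversion_gap: "integrable lborel (inversion_gap x1 x2)"
proof (rule Bochner_Integration.integrable_bound)
  show "integrable lborel (\<lambda>y. 2 * l * gauss l y)"
    by (rule integrable_mult_right[OF integrable_gauss[OF l_pos]])
  show "AE y in lborel. norm (inversion_gap x1 x2 y) \<le> norm (2 * l * gauss l y)"
    unfolding real_norm_def by (intro AE_I2 order_trans[OF abs_inversion_gap_le_gauss abs_ge_self])
qed measurable

lemma integral_inversion_gap:
  "(LINT y|lborel. inversion_gap x1 x2 y) =
     sqrt (2 * pi) * ((LINT x|lborel. f x * normal_density x1 (1 / l) x) -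
                      (LINT x|lborel. f x * normal_density x2 (1 / l) x))"
proof -
  have int: "integrable lborel (\<lambda>y. gauss l y * inversion_integrand f x y)" for x
  proof (rule Bochner_Integration.integrable_bound)
    show "integrable lborel (\<lambda>y. l * gauss l y)"
      by (rule integrable_mult_right[OF integrable_gauss[OF l_pos]])
    show "AE y in lborel. norm (gauss l y * inversion_integrand f x y) \<le> norm (l * gauss l y)"
    proof (rule AE_I2)
      fix y
      have "gauss l y * \<bar>inversion_integrand f x y\<bar> \<le> gauss l y * l"
        using abs_inversion_integrand_le[of f x y] norm_f_hat_le[of y]
        by (intro mult_left_mono) auto
      then show "norm (gauss l y * inversion_integrand f x y) \<le> norm (l * gauss l y)"
        using l_pos by (simp add: abs_mult mult.commute)
    qed
  qed measurable
  show ?thesis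
    unfolding inversion_gap_def right_diff_distrib
    by (simp add: Bochner_Integration.integral_diff[OF int int]
        integral_gauss_mult_inversion_integrand[OF integrable_f l_pos])
qed

lemma integral_inversion_gap_approx:
  assumes lip: "K-lipschitz_on UNIV f"
  shows "\<bar>(LINT y|lborel. inversion_gap x1 x2 y) - sqrt (2 * pi) * (f x1 - f x2)\<bar> \<le> 4 * K / l"
proof -
  define E where "E x0 = (LINT x|lborel. f x * normal_density x0 (1 / l) x) - f x0" for x0
  define e where "e = K * (1 / l) * sqrt (2 / pi)"
  have "\<bar>E x0\<bar> \<le> e" for x0
    unfolding E_def e_def
    by (rule abs_integral_mult_normal_density_sub_le[OF lip]) (use l_pos in simp)
  then have "\<bar>E x1 - E x2\<bar> \<le> 2 * e"
    using abs_triangle_ineq4[of "E x1" "E x2"] by (smt (verit))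
  moreover have "(LINT y|lborel. inversion_gap x1 x2 y) - sqrt (2 * pi) * (f x1 - f x2) =
                 sqrt (2 * pi) * (E x1 - E x2)"
    unfolding integral_inversion_gap E_def by (simp add: algebra_simps)
  ultimately have "\<bar>(LINT y|lborel. inversion_gap x1 x2 y) - sqrt (2 * pi) * (f x1 - f x2)\<bar> \<le>
                   sqrt (2 * pi) * (2 * e)"
    by (simp add: abs_mult mult_left_mono)
  also have "\<dots> = 2 * K / l * (sqrt (2 * pi) * sqrt (2 / pi))"
    by (simp add: e_def mult_ac)
  also have "sqrt (2 * pi) * sqrt (2 / pi) = 2"
    by (simp add: real_sqrt_mult[symmetric])
  finally show ?thesis
    by simp
qed

lemma set_integrable_inversion_gap:
  "A \<in> sets borel \<Longrightarrow> set_integrable lborel A (inversion_gap x1 x2)"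
  unfolding set_integrable_def
  by (rule integrable_mult_indicator) (simp_all add: integrable_inversion_gap)

lemma abs_set_integral_inversion_gap_low:
  assumes "0 \<le> a"
  shows "\<bar>LINT y:{-a<..<a}|lborel. inversion_gap x1 x2 y\<bar> \<le> 2 * a\<^sup>2 * \<bar>x1 - x2\<bar> * l"
proof -
  have bound: "\<bar>inversion_gap x1 x2 y\<bar> \<le> a * \<bar>x1 - x2\<bar> * l" if "y \<in> {-a<..<a}" for y
  proof -
    have "\<bar>inversion_gap x1 x2 y\<bar> \<le> gauss l y * (cmod (f_hat y) * min 2 (\<bar>y\<bar> * \<bar>x1 - x2\<bar>))"
      by (rule abs_inversion_gap_le)
    also have "\<dots> \<le> 1 * (l * (a * \<bar>x1 - x2\<bar>))"
      using that norm_f_hat_le[of y] l_pos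
      by (intro mult_mono min.coboundedI2) (auto intro: mult_right_mono)
    finally show ?thesis
      by (simp add: mult_ac)
  qed
  have const: "set_integrable lborel {-a<..<a} (\<lambda>_. a * \<bar>x1 - x2\<bar> * l)"
    unfolding set_integrable_def
    by (intro integrable_scaleR_left integrable_real_indicator) (use assms in auto)
  have "\<bar>LINT y:{-a<..<a}|lborel. inversion_gap x1 x2 y\<bar> \<le>
        (LINT y:{-a<..<a}|lborel. \<bar>inversion_gap x1 x2 y\<bar>)"
    using set_integral_norm_bound[OF set_integrable_inversion_gap] by simp
  also have "\<dots> \<le> (LINT y:{-a<..<a}|lborel. a * \<bar>x1 - x2\<bar> * l)"
    using bound const set_integrable_norm[OF set_integrable_inversion_gap]
    by (intro set_integral_mono) simp_all
  also have "\<dots> = 2 * a\<^sup>2 * \<bar>x1 - x2\<bar> * l"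
    using assms by (simp add: set_integral_const measure_lborel_Ioo power2_eq_square)
  finally show ?thesis .
qed

lemma abs_set_integral_inversion_gap_tail:
  assumes "0 \<le> B"
  shows "\<bar>LINT y:{..<-B} \<union> {B<..}|lborel. inversion_gap x1 x2 y\<bar> \<le>
           4 * sqrt pi * l\<^sup>2 * exp (- B\<^sup>2 / (4 * l\<^sup>2))"
proof -
  let ?T = "{..<-B} \<union> {B<..}" and ?c = "2 * l * exp (- B\<^sup>2 / (4 * l\<^sup>2))" and ?l = "sqrt 2 * l"
  have l2: "0 < ?l"
    using l_pos by simp
  have bound: "\<bar>indicator ?T y * inversion_gap x1 x2 y\<bar> \<le> ?c * gauss ?l y" for y
  proof (cases "y \<in> ?T")
    case True
    then have "gauss l y \<le> exp (- B\<^sup>2 / (4 * l\<^sup>2)) * gauss ?l y"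
      using assms by (intro gauss_le_exp_mult_gauss) auto
    then have "2 * l * gauss l y \<le> ?c * gauss ?l y"
      using l_pos by (simp add: mult_left_mono mult.assoc)
    then show ?thesis
      using True abs_inversion_gap_le_gauss[of x1 x2 y] by simp
  next
    case False
    then show ?thesis
      using l_pos by simp
  qed
  have "\<bar>LINT y:?T|lborel. inversion_gap x1 x2 y\<bar> \<le>
        (LINT y|lborel. \<bar>indicator ?T y * inversion_gap x1 x2 y\<bar>)"
    unfolding set_lebesgue_integral_def using integral_norm_bound by simp
  also have "\<dots> \<le> (LINT y|lborel. ?c * gauss ?l y)"
  proof (rule integral_mono[OF _ _ bound])
    show "integrable lborel (\<lambda>y. \<bar>indicator ?T y * inversion_gap x1 x2 y\<bar>)"
      using set_integrable_inversion_gap[of ?T x1 x2]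
      unfolding set_integrable_def real_scaleR_def by (rule integrable_abs) simp
    show "integrable lborel (\<lambda>y. ?c * gauss ?l y)"
      by (rule integrable_mult_right[OF integrable_gauss[OF l2]])
  qed
  also have "\<dots> = ?c * (?l * sqrt (2 * pi))"
    by (simp add: integral_gauss[OF l2])
  also have "\<dots> = 4 * sqrt pi * l\<^sup>2 * exp (- B\<^sup>2 / (4 * l\<^sup>2))"
    by (simp add: real_sqrt_mult power2_eq_square)
  finally show ?thesis .
qed

lemma inversion_gap_le_energy:
  assumes t: "0 < t"
  shows "inversion_gap x1 x2 y \<le> t * (cmod (f_hat y))\<^sup>2 + gauss l y / t"
proof -
  have amgm: "2 * u * v \<le> t * u\<^sup>2 + v\<^sup>2 / t" for u v :: real
  proof -
    have "0 \<le> (t * u - v)\<^sup>2 / t"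
      using t by simp
    also have "\<dots> = t * u\<^sup>2 + v\<^sup>2 / t - 2 * u * v"
      using t by (simp add: power2_eq_square field_simps)
    finally show ?thesis
      by simp
  qed
  have "inversion_gap x1 x2 y \<le> gauss l y * (cmod (f_hat y) * min 2 (\<bar>y\<bar> * \<bar>x1 - x2\<bar>))"
    using abs_inversion_gap_le by (rule order_trans[OF abs_ge_self])
  also have "\<dots> \<le> gauss l y * (cmod (f_hat y) * 2)"
    by (intro mult_left_mono) auto
  also have "\<dots> = 2 * cmod (f_hat y) * gauss l y"
    by (simp add: mult_ac)
  also have "\<dots> \<le> t * (cmod (f_hat y))\<^sup>2 + (gauss l y)\<^sup>2 / t"
    by (rule amgm)
  also have "(gauss l y)\<^sup>2 \<le> gauss l y"
    by (simp add: power2_eq_square mult_left_le)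
  finally show ?thesis
    using t by (simp add: divide_right_mono)
qed

lemma set_integral_inversion_gap_le:
  assumes S: "S \<in> sets borel" "emeasure lborel S < \<infinity>" and t: "0 < t"
  shows "(LINT y:S|lborel. inversion_gap x1 x2 y) \<le>
           t * integral S (\<lambda>y. (cmod (f_hat y))\<^sup>2) + l * sqrt (2 * pi) / t"
proof -
  have pointwise: "inversion_gap x1 x2 y \<le> t * (cmod (f_hat y))\<^sup>2 + gauss l y / t" for y
    by (rule inversion_gap_le_energy[OF t])
  have sq_int: "set_integrable lborel S (\<lambda>y. (cmod (f_hat y))\<^sup>2)"
  proof (rule set_integrable_bound)
    show "set_integrable lborel S (\<lambda>_. l\<^sup>2)"
      unfolding set_integrable_def
      by (intro integrable_scaleR_left integrable_real_indicator) (use S in auto)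
    show "AE y in lborel. y \<in> S \<longrightarrow> norm ((cmod (f_hat y))\<^sup>2) \<le> norm (l\<^sup>2)"
      using norm_f_hat_le by (intro AE_I2) (simp add: power_mono)
    show "set_borel_measurable lborel S (\<lambda>y. (cmod (f_hat y))\<^sup>2)"
      unfolding set_borel_measurable_def using S(1) by measurable
  qed
  have gauss_int: "set_integrable lborel S (gauss l)"
    unfolding set_integrable_def
    by (rule integrable_mult_indicator) (use S integrable_gauss[OF l_pos] in auto)
  have "(LINT y:S|lborel. inversion_gap x1 x2 y) \<le>
        (LINT y:S|lborel. t * (cmod (f_hat y))\<^sup>2 + gauss l y / t)"
    using set_integrable_inversion_gap[OF S(1)] sq_int gauss_int pointwise
    by (intro set_integral_mono) auto
  also have "\<dots> = t * (LINT y:S|lborel. (cmod (f_hat y))\<^sup>2) + (LINT y:S|lborel. gauss l y) / t"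
    using sq_int gauss_int
    by (simp add: set_integral_add set_integral_mult_right set_integral_divide_zero)
  also have "(LINT y:S|lborel. gauss l y) \<le> (LINT y|lborel. gauss l y)"
    unfolding set_lebesgue_integral_def
    using gauss_int integrable_gauss[OF l_pos] unfolding set_integrable_def
    by (intro integral_mono) (auto simp: indicator_def)
  also have "(LINT y:S|lborel. (cmod (f_hat y))\<^sup>2) = integral S (\<lambda>y. (cmod (f_hat y))\<^sup>2)"
    by (rule set_borel_integral_eq_integral(2)[OF sq_int])
  finally show ?thesis
    using t by (simp add: integral_gauss[OF l_pos] divide_right_mono)
qed

lemma integral_inversion_gap_split:
  assumes "0 \<le> a" "a \<le> B"
  shows "(LINT y|lborel. inversion_gap x1 x2 y) =
           (LINT y:{-B..-a} \<union> {a..B}|lborel. inversion_gap x1 x2 y) +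
           (LINT y:{-a<..<a}|lborel. inversion_gap x1 x2 y) +
           (LINT y:{..<-B} \<union> {B<..}|lborel. inversion_gap x1 x2 y)"
proof -
  let ?S = "{-B..-a} \<union> {a..B}" and ?L = "{-a<..<a}" and ?T = "{..<-B} \<union> {B<..}"
  have UNIV_eq: "UNIV = (?S \<union> ?L) \<union> ?T"
    using assms by auto
  have "(LINT y|lborel. inversion_gap x1 x2 y) =
        (LINT y:(?S \<union> ?L) \<union> ?T|lborel. inversion_gap x1 x2 y)"
    by (simp flip: UNIV_eq add: set_integral_space[OF integrable_inversion_gap, simplified])
  also have "\<dots> = (LINT y:?S \<union> ?L|lborel. inversion_gap x1 x2 y) +
                    (LINT y:?T|lborel. inversion_gap x1 x2 y)"
    using assms
    by (intro set_integral_Un set_integrable_inversion_gap) auto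
  also have "(LINT y:?S \<union> ?L|lborel. inversion_gap x1 x2 y) =
             (LINT y:?S|lborel. inversion_gap x1 x2 y) + (LINT y:?L|lborel. inversion_gap x1 x2 y)"
    using assms
    by (intro set_integral_Un set_integrable_inversion_gap) auto
  finally show ?thesis .
qed

lemma integral_inversion_gap_le:
  assumes "0 \<le> a" "a \<le> B" "0 < t"
  shows "(LINT y|lborel. inversion_gap x1 x2 y) \<le>
           t * integral ({-B..-a} \<union> {a..B}) (\<lambda>y. (cmod (f_hat y))\<^sup>2) + l * sqrt (2 * pi) / t +
           2 * a\<^sup>2 * \<bar>x1 - x2\<bar> * l + 4 * sqrt pi * l\<^sup>2 * exp (- B\<^sup>2 / (4 * l\<^sup>2))"
proof -
  have "emeasure lborel ({-B..-a} \<union> {a..B}) < \<infinity>"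
    by (intro emeasure_bounded_finite compact_imp_bounded compact_Un compact_Icc)
  then show ?thesis
    using integral_inversion_gap_split[OF assms(1,2), of x1 x2]
      set_integral_inversion_gap_le[of "{-B..-a} \<union> {a..B}" t x1 x2]
      abs_set_integral_inversion_gap_low[OF assms(1), of x1 x2]
      abs_set_integral_inversion_gap_tail[of B x1 x2] assms
    by (simp add: abs_le_iff)
qed

end

locale gauss_damped =
  fixes \<sigma> :: "real \<Rightarrow> real" and L l :: real
  assumes abs_le_one: "\<And>x. \<bar>\<sigma> x\<bar> \<le> 1"
    and lipschitz: "L-lipschitz_on UNIV \<sigma>"
    and l_ge_one: "1 \<le> l"
begin

lemma \<sigma>_measurable [measurable]: "\<sigma> \<in> borel_measurable borel"
  using lipschitz_on_continuous_on[OF lipschitz] by (rule borel_measurable_continuous_onI)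

sublocale gauss_dominated "\<lambda>x. \<sigma> x * gauss l x" l
proof
  show "\<bar>\<sigma> x * gauss l x\<bar> \<le> gauss l x" for x
    using abs_le_one[of x] by (simp add: abs_mult mult_left_le_one_le)
qed (use l_ge_one in auto)

lemma damped_lipschitz: "(L + 1 / l)-lipschitz_on UNIV (\<lambda>x. \<sigma> x * gauss l x)"
  using lipschitz_on_mult_real[OF lipschitz gauss_lipschitz, of l 1 1] abs_le_one l_ge_one
  by (simp add: add.commute)

lemma abs_damped_sub_le: "\<bar>\<sigma> x * gauss l x - \<sigma> x\<bar> \<le> x\<^sup>2 / (2 * l\<^sup>2)"
proof -
  have "\<sigma> x * gauss l x - \<sigma> x = - (\<sigma> x * (1 - gauss l x))"
    by (simp add: algebra_simps)
  then have "\<bar>\<sigma> x * gauss l x - \<sigma> x\<bar> = \<bar>\<sigma> x\<bar> * (1 - gauss l x)"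
    by (simp add: abs_mult)
  also have "\<dots> \<le> 1 - gauss l x"
    using abs_le_one[of x] by (simp add: mult_left_le_one_le)
  also have "\<dots> \<le> x\<^sup>2 / (2 * l\<^sup>2)"
    by (rule one_minus_gauss_le)
  finally show ?thesis .
qed

lemma damped_diff_ge:
  assumes "x1 \<in> {-R..R}" and "x2 \<in> {-R..R}"
  shows "\<sigma> x1 - \<sigma> x2 - R\<^sup>2 / l\<^sup>2 \<le> \<sigma> x1 * gauss l x1 - \<sigma> x2 * gauss l x2"
proof -
  have bound: "x\<^sup>2 / (2 * l\<^sup>2) \<le> R\<^sup>2 / l\<^sup>2 / 2" if "x \<in> {-R..R}" for x
  proof -
    have "x\<^sup>2 \<le> R\<^sup>2"
      using that abs_le_square_iff[of x R] by auto
    then have "x\<^sup>2 / l\<^sup>2 \<le> R\<^sup>2 / l\<^sup>2"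
      by (rule divide_right_mono) simp
    then show ?thesis
      by simp
  qed
  show ?thesis
    using abs_damped_sub_le[of x1] abs_damped_sub_le[of x2] bound[OF assms(1)] bound[OF assms(2)]
    by (auto simp: abs_le_iff)
qed

lemma integral_inversion_gap_ge:
  assumes x1: "x1 \<in> {-R..R}" and x2: "x2 \<in> {-R..R}" and gap: "\<epsilon> \<le> \<sigma> x1 - \<sigma> x2"
    and R: "1 \<le> R" and eps: "0 < \<epsilon>" "\<epsilon> < 1" and ell: "20 * (R + L) \<le> l * \<epsilon>"
  shows "2 * \<epsilon> \<le> (LINT y|lborel. inversion_gap x1 x2 y)"
proof -
  have "R / l \<le> \<epsilon> / 20"
    using ell lipschitz_on_nonneg[OF lipschitz] l_ge_one by (simp add: field_simps)
  then have "(R / l)\<^sup>2 \<le> (\<epsilon> / 20)\<^sup>2"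
    using R l_ge_one by (intro power_mono) auto
  also have "\<dots> \<le> \<epsilon> / 400"
    using eps by (simp add: power2_eq_square)
  finally have "\<epsilon> - \<epsilon> / 400 \<le> \<sigma> x1 * gauss l x1 - \<sigma> x2 * gauss l x2"
    using damped_diff_ge[OF x1 x2] gap by (simp add: power_divide)
  moreover have "2.4 \<le> sqrt (2 * pi)"
    using pi_gt3 by (intro real_le_rsqrt) (simp add: power2_eq_square)
  ultimately have main:
    "2.4 * (\<epsilon> - \<epsilon> / 400) \<le> sqrt (2 * pi) * (\<sigma> x1 * gauss l x1 - \<sigma> x2 * gauss l x2)"
    using eps by (intro mult_mono) auto
  have "1 / l \<le> 1"
    using l_ge_one by simp
  then have "L + 1 / l \<le> L + R"
    using R by simp
  also have "\<dots> \<le> l * \<epsilon> / 20"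
    using ell by simp
  finally have "4 * (L + 1 / l) / l \<le> 4 * (l * \<epsilon> / 20) / l"
    using l_ge_one by (intro divide_right_mono mult_left_mono) auto
  then have error: "4 * (L + 1 / l) / l \<le> \<epsilon> / 5"
    using l_ge_one by simp
  have "2 * \<epsilon> \<le> 2.4 * (\<epsilon> - \<epsilon> / 400) - \<epsilon> / 5"
    using eps by simp
  also have "\<dots> \<le> sqrt (2 * pi) * (\<sigma> x1 * gauss l x1 - \<sigma> x2 * gauss l x2) - 4 * (L + 1 / l) / l"
    using main error by (rule diff_mono)
  also have "\<dots> \<le> (LINT y|lborel. inversion_gap x1 x2 y)"
    using abs_le_D2[OF integral_inversion_gap_approx[OF damped_lipschitz, of x1 x2]] by simp
  finally show ?thesis .
qed

end

lemma gauss_tail_le: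
  fixes l X \<epsilon> :: real
  assumes l: "20 \<le> l" and lX: "l \<le> X" and eX: "20 \<le> \<epsilon> * X"
  shows "4 * sqrt pi * l\<^sup>2 * exp (- (4 * l * ln X)\<^sup>2 / (4 * l\<^sup>2)) \<le> \<epsilon> / 2"
proof -
  have X: "20 \<le> X"
    using l lX by linarith
  have "exp (2::real) = exp 1 * exp 1"
    by (simp flip: exp_add)
  also have "\<dots> \<le> 3 * 3"
    using exp_le by (intro mult_mono) auto
  finally have lnX: "2 \<le> ln X"
    using X by (subst ln_ge_iff) auto
  have "8 * ln X \<le> 4 * (ln X)\<^sup>2"
    using lnX mult_right_mono[OF lnX, of "ln X"] by (simp add: power2_eq_square)
  moreover have "(4 * l * ln X)\<^sup>2 / (4 * l\<^sup>2) = 4 * (ln X)\<^sup>2"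
    using l by (simp add: power_mult_distrib)
  ultimately have "exp (- (4 * l * ln X)\<^sup>2 / (4 * l\<^sup>2)) \<le> exp (- ln (X ^ 8))"
    using X by (simp add: ln_realpow)
  also have "\<dots> = 1 / X ^ 8"
    using X by (simp add: exp_minus inverse_eq_divide)
  finally have "4 * sqrt pi * l\<^sup>2 * exp (- (4 * l * ln X)\<^sup>2 / (4 * l\<^sup>2)) \<le> 4 * 2 * X\<^sup>2 * (1 / X ^ 8)"
    using l lX pi_less_4 real_sqrt_le_mono[of pi 4]
    by (intro mult_mono power_mono) auto
  also have "\<dots> = 8 / X ^ 6"
    using X by (simp add: field_simps power_add[symmetric])
  also have "\<dots> \<le> \<epsilon> / 2"
  proof -
    have "20 * 1 \<le> (\<epsilon> * X) * X ^ 5"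
      using eX X by (intro mult_mono one_le_power) auto
    also have "\<dots> = \<epsilon> * X ^ 6"
      using power_add[of X 1 5] by simp
    finally show ?thesis
      using X by (simp add: field_simps)
  qed
  finally show ?thesis .
qed

lemma cutoff_errors_le:
  fixes R \<epsilon> l :: real
  assumes R: "1 \<le> R" and eps: "0 < \<epsilon>" "\<epsilon> < 1" and l: "20 \<le> l" "20 * R \<le> l * \<epsilon>"
    and x12: "\<bar>x1 - x2\<bar> \<le> 2 * R"
  defines "a \<equiv> \<epsilon> / 8 * sqrt (1 / (R * l))" and "B \<equiv> 4 * l * ln (l * R / \<epsilon>)"
  shows "0 \<le> a" "a \<le> B"
    "2 * a\<^sup>2 * \<bar>x1 - x2\<bar> * l + 4 * sqrt pi * l\<^sup>2 * exp (- B\<^sup>2 / (4 * l\<^sup>2)) \<le> 9 / 16 * \<epsilon>"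
proof -
  have Rl: "1 \<le> R * l"
    using R l by (metis mult_mono one_le_numeral order.trans mult_1_right zero_le_one)
  show "0 \<le> a"
    using eps Rl by (simp add: a_def)
  have "sqrt (1 / (R * l)) \<le> 1"
    using Rl by simp
  then have "a \<le> 1"
    unfolding a_def by (intro mult_le_one) (use eps Rl in auto)
  moreover have lX: "l \<le> l * R / \<epsilon>"
    using R eps l by (simp add: field_simps mult_left_mono)
  then have "1 \<le> ln (l * R / \<epsilon>)"
    using l exp_le by (subst ln_ge_iff) auto
  then have "1 * 1 \<le> (4 * l) * ln (l * R / \<epsilon>)"
    using l by (intro mult_mono) auto
  then have "1 \<le> B"
    by (simp add: B_def)
  ultimately show "a \<le> B"
    by linarith
  have "2 * a\<^sup>2 * \<bar>x1 - x2\<bar> * l \<le> 2 * a\<^sup>2 * (2 * R) * l"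
    using x12 l by (intro mult_right_mono mult_left_mono) auto
  also have "\<dots> = \<epsilon>\<^sup>2 / 16"
    using Rl R l by (simp add: a_def power_mult_distrib power_divide)
  also have "\<dots> \<le> \<epsilon> / 16"
    using eps by (simp add: power2_eq_square)
  finally have low: "2 * a\<^sup>2 * \<bar>x1 - x2\<bar> * l \<le> \<epsilon> / 16" .
  have "20 * 1 \<le> l * R"
    using l R by (intro mult_mono) auto
  then have "20 \<le> \<epsilon> * (l * R / \<epsilon>)"
    using eps by simp
  then have "4 * sqrt pi * l\<^sup>2 * exp (- B\<^sup>2 / (4 * l\<^sup>2)) \<le> \<epsilon> / 2"
    unfolding B_def by (rule gauss_tail_le[OF l(1) lX])
  with low show "2 * a\<^sup>2 * \<bar>x1 - x2\<bar> * l + 4 * sqrt pi * l\<^sup>2 * exp (- B\<^sup>2 / (4 * l\<^sup>2)) \<le> 9 / 16 * \<epsilon>"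
    by linarith
qed

lemma (in gauss_damped) fourier_energy_ge:
  assumes x1: "x1 \<in> {-R..R}" and x2: "x2 \<in> {-R..R}" and gap: "\<epsilon> \<le> \<sigma> x1 - \<sigma> x2"
    and R: "1 \<le> R" and eps: "0 < \<epsilon>" "\<epsilon> < 1" and ell: "20 * (R + L) \<le> l * \<epsilon>"
    and l: "20 \<le> l"
  defines "a \<equiv> \<epsilon> / 8 * sqrt (1 / (R * l))" and "B \<equiv> 4 * l * ln (l * R / \<epsilon>)"
  shows "\<epsilon>\<^sup>2 / (8 * R * l\<^sup>2) \<le> integral ({-B..-a} \<union> {a..B}) (\<lambda>y. (cmod (f_hat y))\<^sup>2)"
proof -
  define t where "t = 8 * R * l\<^sup>2 / \<epsilon>"
  define J where "J = integral ({-B..-a} \<union> {a..B}) (\<lambda>y. (cmod (f_hat y))\<^sup>2)"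
  have t: "0 < t"
    using R l eps by (simp add: t_def)
  have "1 * 20 \<le> R * l"
    using R l by (intro mult_mono) auto
  have "l * sqrt (2 * pi) / t = \<epsilon> * sqrt (2 * pi) / (8 * (R * l))"
    using R l eps by (simp add: t_def power2_eq_square)
  also have "\<dots> \<le> \<epsilon> * 3 / (8 * 20)"
    using \<open>1 * 20 \<le> R * l\<close> eps pi_less_4 real_sqrt_le_mono[of "2 * pi" 9]
    by (intro frac_le mult_left_mono) auto
  also have "\<dots> \<le> \<epsilon> / 16"
    using eps by simp
  finally have small: "l * sqrt (2 * pi) / t \<le> \<epsilon> / 16" .
  have "20 * R \<le> l * \<epsilon>"
    using ell lipschitz_on_nonneg[OF lipschitz] by (simp add: algebra_simps)
  moreover have "\<bar>x1 - x2\<bar> \<le> 2 * R"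
    using x1 x2 by auto
  ultimately have a: "0 \<le> a" "a \<le> B"
    and errors: "2 * a\<^sup>2 * \<bar>x1 - x2\<bar> * l + 4 * sqrt pi * l\<^sup>2 * exp (- B\<^sup>2 / (4 * l\<^sup>2)) \<le> 9 / 16 * \<epsilon>"
    using cutoff_errors_le[OF R eps l, of x1 x2, folded a_def B_def] by auto
  have "2 * \<epsilon> \<le> (LINT y|lborel. inversion_gap x1 x2 y)"
    by (rule integral_inversion_gap_ge[OF x1 x2 gap R eps ell])
  also have "\<dots> \<le> t * J + l * sqrt (2 * pi) / t +
      2 * a\<^sup>2 * \<bar>x1 - x2\<bar> * l + 4 * sqrt pi * l\<^sup>2 * exp (- B\<^sup>2 / (4 * l\<^sup>2))"
    unfolding J_def by (rule integral_inversion_gap_le[OF a t])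
  finally have "\<epsilon> \<le> t * J"
    using small errors eps by linarith
  then have "\<epsilon> / t \<le> J"
    using t by (simp add: pos_divide_le_eq mult.commute)
  moreover have "\<epsilon> / t = \<epsilon>\<^sup>2 / (8 * R * l\<^sup>2)"
    using eps by (simp add: t_def power2_eq_square)
  ultimately show ?thesis
    by (simp add: J_def)
qed

theorem corollary4p10:
  fixes \<sigma> :: "real \<Rightarrow> real" and L R \<epsilon> l :: real
  assumes bdd: "\<And>x. \<bar>\<sigma> x\<bar> \<le> 1"
    and lip: "L-lipschitz_on UNIV \<sigma>"
    and nondeg: "nondegenerate R \<epsilon> \<sigma>"
    and R: "R \<ge> 1" and eps_pos: "0 < \<epsilon>" and eps_lt: "\<epsilon> < 1"
    and ell: "l \<ge> 20 * (R + L) / \<epsilon>"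
  shows "integral ({-(4 * l * ln (l * R / \<epsilon>)) .. -(\<epsilon> / 8 * sqrt (1 / (R * l)))} \<union>
                   {\<epsilon> / 8 * sqrt (1 / (R * l)) .. 4 * l * ln (l * R / \<epsilon>)})
           (\<lambda>y. (cmod (fourier (\<lambda>x. complex_of_real (\<sigma> x * exp (- x\<^sup>2 / (2 * l\<^sup>2)))) y))\<^sup>2)
         \<ge> \<epsilon>\<^sup>2 / (8 * R * l\<^sup>2)"
proof -
  obtain x1 x2 where x1: "x1 \<in> {-R..R}" and x2: "x2 \<in> {-R..R}" and gap: "\<epsilon> \<le> \<sigma> x1 - \<sigma> x2"
    using nondeg unfolding nondegenerate_def by auto
  have ell': "20 * (R + L) \<le> l * \<epsilon>"
    using ell eps_pos by (simp add: pos_divide_le_eq)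
  then have "20 \<le> l * \<epsilon>"
    using R lipschitz_on_nonneg[OF lip] by (simp add: algebra_simps)
  moreover from this have "l * \<epsilon> < l"
    using eps_pos eps_lt zero_less_mult_pos2[of l \<epsilon>] by simp
  ultimately have l: "20 \<le> l"
    by simp
  interpret gauss_damped \<sigma> L l
    using bdd lip l by unfold_locales auto
  show ?thesis
    using fourier_energy_ge[OF x1 x2 gap R eps_pos eps_lt ell' l] by (simp add: gauss_def)
qed

end
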